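(* Let $U$ be a VLA-J-SS. Then $U$ satisfies the half Jacobi identity if and only if it satisfies the half commutator formula: for all homogeneous $u,v,w\in U$ and all $m,n\in\mathbb{N}$, $$u_m(v_nw)-\varepsilon_{u,v}v_n(u_mw)=\sum_{i\ge0}\binom{m}{i}(u_iv)_{m+n-i}w .$$
   Context: All spaces over $\mathbb{C}$; $\mathbb{N}=\{0,1,2,\dots\}$; $\varepsilon_{u,v}=(-1)^{|u||v|}$. A VLA-J-SS is a $\mathbb{Z}_2$-graded space $U$ with an even linear operator $D$ and bilinear products $u_nv$ ($n\in\mathbb{N}$) such that for homogeneous $u,v$: $u_nv=0$ for $n$ large; $(Du)_nv=-nu_{n-1}v$ (read as $0$ for $n=0$); $D(u_nv)=(Du)_nv+u_n(Dv)$; $|u_nv|=|u|+|v|$. The half Jacobi identity is: for all homogeneous $u,v,w\in U$ and all $k,m,n\in\mathbb{N}$, $\sum_{i\ge0}(-1)^i\binom{k}{i}(u_{m+k-i}(v_{n+i}w)-\varepsilon_{u,v}(-1)^kv_{n+k-i}(u_{m+i}w))=\sum_{i\ge0}\binom{m}{i}(u_{k+i}v)_{m+n-i}w$. *)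

theory Defs
  imports Complex_Main
begin

text \<open>A complex vector space is modelled by a carrier type 'a (an abelian group) with an
explicit scalar multiplication smul satisfying the vector_space axioms over complex.
The Z2-grading is G :: bool => 'a set, G False = even part, G True = odd part.
Products: prd n u v stands for u_n v.\<close>

definition eps :: "bool \<Rightarrow> bool \<Rightarrow> complex" where
  "eps p q = (if p \<and> q then -1 else 1)"

definition vla_j_ss ::
  "(complex \<Rightarrow> 'a::ab_group_add \<Rightarrow> 'a) \<Rightarrow> (bool \<Rightarrow> 'a set) \<Rightarrow> ('a \<Rightarrow> 'a)
    \<Rightarrow> (nat \<Rightarrow> 'a \<Rightarrow> 'a \<Rightarrow> 'a) \<Rightarrow> bool" where
  "vla_j_ss smul G D prd \<longleftrightarrow>
     vector_space smul \<and>
     (\<forall>p. module.subspace smul (G p)) \<and>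
     G False \<inter> G True = {0} \<and>
     (\<forall>x. \<exists>a b. a \<in> G False \<and> b \<in> G True \<and> x = a + b) \<and>
     Vector_Spaces.linear smul smul D \<and>
     (\<forall>p. D ` G p \<subseteq> G p) \<and>
     (\<forall>n u. Vector_Spaces.linear smul smul (prd n u)) \<and>
     (\<forall>n v. Vector_Spaces.linear smul smul (\<lambda>u. prd n u v)) \<and>
     (\<forall>p q u v. u \<in> G p \<longrightarrow> v \<in> G q \<longrightarrow>
        (\<exists>N. \<forall>n\<ge>N. prd n u v = 0) \<and>
        (\<forall>n. prd n (D u) v = - smul (of_nat n) (prd (n - 1) u v)) \<and>
        (\<forall>n. D (prd n u v) = prd n (D u) v + prd n u (D v)) \<and>
        (\<forall>n. prd n u v \<in> G (p \<noteq> q)))"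

definition half_jacobi ::
  "(complex \<Rightarrow> 'a::ab_group_add \<Rightarrow> 'a) \<Rightarrow> (bool \<Rightarrow> 'a set)
    \<Rightarrow> (nat \<Rightarrow> 'a \<Rightarrow> 'a \<Rightarrow> 'a) \<Rightarrow> bool" where
  "half_jacobi smul G prd \<longleftrightarrow>
     (\<forall>p q r u v w k m n. u \<in> G p \<longrightarrow> v \<in> G q \<longrightarrow> w \<in> G r \<longrightarrow>
        (\<Sum>i\<le>k. smul ((-1) ^ i * of_nat (k choose i))
            (prd (m + k - i) u (prd (n + i) v w)
             - smul (eps p q * (-1) ^ k) (prd (n + k - i) v (prd (m + i) u w))))
        = (\<Sum>i\<le>m. smul (of_nat (m choose i)) (prd (m + n - i) (prd (k + i) u v) w)))"

definition half_commutator ::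
  "(complex \<Rightarrow> 'a::ab_group_add \<Rightarrow> 'a) \<Rightarrow> (bool \<Rightarrow> 'a set)
    \<Rightarrow> (nat \<Rightarrow> 'a \<Rightarrow> 'a \<Rightarrow> 'a) \<Rightarrow> bool" where
  "half_commutator smul G prd \<longleftrightarrow>
     (\<forall>p q r u v w m n. u \<in> G p \<longrightarrow> v \<in> G q \<longrightarrow> w \<in> G r \<longrightarrow>
        prd m u (prd n v w) - smul (eps p q) (prd n v (prd m u w))
        = (\<Sum>i\<le>m. smul (of_nat (m choose i)) (prd (m + n - i) (prd i u v) w)))"

end

theory Submission
  imports Defs
begin

text \<open>The case k = 0 of the half Jacobi identity is literally the half commutator formula.
Conversely, both sides of the half Jacobi identity, viewed as functions F k m n, satisfy the
Pascal-type recursion F (k + 1) m n = F k (m + 1) n - F k m (n + 1), so the identity follows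
from its case k = 0 by induction on k.\<close>

context module
begin

lemma alternating_binomial_sum_Suc:
  "(\<Sum>i\<le>Suc k. ((-1)^i * of_nat (Suc k choose i)) *s g (a + Suc k - i) (b + i)) =
   (\<Sum>i\<le>k. ((-1)^i * of_nat (k choose i)) *s g (Suc a + k - i) (b + i)) -
   (\<Sum>i\<le>k. ((-1)^i * of_nat (k choose i)) *s g (a + k - i) (Suc b + i))"
proof -
  \<comment> \<open>Pascal's rule splits the left side; the part with binomial k is the sum S, read off
    once by dropping its vanishing top term and once by shifting the index.\<close>
  define S where "S = (\<Sum>i\<le>Suc k. ((-1)^i * of_nat (k choose i)) *s g (a + Suc k - i) (b + i))"
  have S_top: "S = (\<Sum>i\<le>k. ((-1)^i * of_nat (k choose i)) *s g (Suc a + k - i) (b + i))"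
    unfolding S_def by (simp add: sum.atMost_Suc binomial_eq_0)
  have S_bottom: "S = g (a + Suc k) b
      + (\<Sum>i\<le>k. ((-1)^Suc i * of_nat (k choose Suc i)) *s g (a + k - i) (b + Suc i))"
    unfolding S_def by (subst sum.atMost_Suc_shift) simp
  have "(\<Sum>i\<le>Suc k. ((-1)^i * of_nat (Suc k choose i)) *s g (a + Suc k - i) (b + i))
      = g (a + Suc k) b
        + (\<Sum>i\<le>k. ((-1)^Suc i * of_nat (Suc k choose Suc i)) *s g (a + k - i) (b + Suc i))"
    by (subst sum.atMost_Suc_shift) simp
  also have "(\<Sum>i\<le>k. ((-1)^Suc i * of_nat (Suc k choose Suc i)) *s g (a + k - i) (b + Suc i))
      = (\<Sum>i\<le>k. ((-1)^Suc i * of_nat (k choose Suc i)) *s g (a + k - i) (b + Suc i))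
        - (\<Sum>i\<le>k. ((-1)^i * of_nat (k choose i)) *s g (a + k - i) (Suc b + i))"
    by (subst sum_subtractf[symmetric], rule sum.cong)
      (simp_all add: scale_left_distrib[symmetric] scale_left_diff_distrib[symmetric] algebra_simps)
  finally show ?thesis
    using S_top S_bottom by (simp add: algebra_simps)
qed

lemma binomial_sum_Suc:
  "(\<Sum>i\<le>m. of_nat (m choose i) *s h (Suc k + i) (m + n - i)) =
   (\<Sum>i\<le>Suc m. of_nat (Suc m choose i) *s h (k + i) (Suc m + n - i)) -
   (\<Sum>i\<le>m. of_nat (m choose i) *s h (k + i) (m + Suc n - i))"
proof -
  define S where "S = (\<Sum>i\<le>Suc m. of_nat (m choose i) *s h (k + i) (Suc m + n - i))"
  have S_top: "S = (\<Sum>i\<le>m. of_nat (m choose i) *s h (k + i) (m + Suc n - i))"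
    unfolding S_def by (simp add: sum.atMost_Suc binomial_eq_0)
  have S_bottom: "S = h k (Suc m + n) + (\<Sum>i\<le>m. of_nat (m choose Suc i) *s h (Suc k + i) (m + n - i))"
    unfolding S_def by (subst sum.atMost_Suc_shift) simp
  have "(\<Sum>i\<le>Suc m. of_nat (Suc m choose i) *s h (k + i) (Suc m + n - i))
      = h k (Suc m + n) + (\<Sum>i\<le>m. of_nat (Suc m choose Suc i) *s h (Suc k + i) (m + n - i))"
    by (subst sum.atMost_Suc_shift) simp
  also have "(\<Sum>i\<le>m. of_nat (Suc m choose Suc i) *s h (Suc k + i) (m + n - i))
      = (\<Sum>i\<le>m. of_nat (m choose Suc i) *s h (Suc k + i) (m + n - i))
        + (\<Sum>i\<le>m. of_nat (m choose i) *s h (Suc k + i) (m + n - i))"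
    by (simp add: sum.distrib[symmetric] algebra_simps)
  finally show ?thesis
    using S_top S_bottom by (simp add: algebra_simps)
qed

text \<open>Here A m n stands for u_m (v_n w), B n m for v_n (u_m w) and C j l for (u_j v)_l w.\<close>

lemma jacobi_sum_from_commutator:
  assumes commutator:
    "\<And>m n. A m n - e *s B n m = (\<Sum>i\<le>m. of_nat (m choose i) *s C i (m + n - i))"
  shows "(\<Sum>i\<le>k. ((-1)^i * of_nat (k choose i))
            *s (A (m + k - i) (n + i) - (e * (-1)^k) *s B (n + k - i) (m + i)))
       = (\<Sum>i\<le>m. of_nat (m choose i) *s C (k + i) (m + n - i))"
proof -
  define SA where
    "SA k m n = (\<Sum>i\<le>k. ((-1)^i * of_nat (k choose i)) *s A (m + k - i) (n + i))" for k m n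
  define SB where
    "SB k m n = (\<Sum>i\<le>k. ((-1)^i * of_nat (k choose i)) *s B (n + k - i) (m + i))" for k m n
  define SC where
    "SC k m n = (\<Sum>i\<le>m. of_nat (m choose i) *s C (k + i) (m + n - i))" for k m n
  have sum_split: "(\<Sum>i\<le>k. ((-1)^i * of_nat (k choose i))
            *s (A (m + k - i) (n + i) - (e * (-1)^k) *s B (n + k - i) (m + i)))
      = SA k m n - (e * (-1)^k) *s SB k m n" for k m n
    unfolding SA_def SB_def
    by (simp add: scale_right_diff_distrib sum_subtractf scale_sum_right scale_left_commute mult_ac)
  have SA_Suc: "SA (Suc k) m n = SA k (Suc m) n - SA k m (Suc n)" for k m n
    unfolding SA_def by (rule alternating_binomial_sum_Suc)
  have SB_Suc: "SB (Suc k) m n = SB k m (Suc n) - SB k (Suc m) n" for k m n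
    unfolding SB_def by (rule alternating_binomial_sum_Suc)
  have SC_Suc: "SC (Suc k) m n = SC k (Suc m) n - SC k m (Suc n)" for k m n
    unfolding SC_def by (rule binomial_sum_Suc)
  have "SA k m n - (e * (-1)^k) *s SB k m n = SC k m n" for k m n
  proof (induction k arbitrary: m n)
    case 0
    show ?case
      using commutator unfolding SA_def SB_def SC_def by simp
  next
    case (Suc k)
    have "SA (Suc k) m n - (e * (-1)^Suc k) *s SB (Suc k) m n
        = (SA k (Suc m) n - (e * (-1)^k) *s SB k (Suc m) n)
          - (SA k m (Suc n) - (e * (-1)^k) *s SB k m (Suc n))"
      unfolding SA_Suc SB_Suc by (simp add: scale_right_diff_distrib algebra_simps)
    also have "\<dots> = SC (Suc k) m n"
      using Suc SC_Suc by simp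
    finally show ?case .
  qed
  then show ?thesis
    unfolding sum_split SC_def .
qed

end

lemma half_commutator_if_half_jacobi:
  assumes "vector_space smul" and jacobi: "half_jacobi smul G prd"
  shows "half_commutator smul G prd"
  unfolding half_commutator_def
proof (intro allI impI)
  interpret vector_space smul by fact
  fix p q r u v w m n
  assume "u \<in> G p" "v \<in> G q" "w \<in> G r"
  from jacobi[unfolded half_jacobi_def, rule_format, OF this, of 0 m n]
  show "prd m u (prd n v w) - smul (eps p q) (prd n v (prd m u w))
      = (\<Sum>i\<le>m. smul (of_nat (m choose i)) (prd (m + n - i) (prd i u v) w))"
    by simp
qed

lemma half_jacobi_if_half_commutator:
  assumes "vector_space smul" and commutator: "half_commutator smul G prd"
  shows "half_jacobi smul G prd"
  unfolding half_jacobi_def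
proof (intro allI impI)
  interpret vector_space smul by fact
  fix p q r u v w k m n
  assume "u \<in> G p" "v \<in> G q" "w \<in> G r"
  with commutator show "(\<Sum>i\<le>k. smul ((-1) ^ i * of_nat (k choose i))
        (prd (m + k - i) u (prd (n + i) v w)
         - smul (eps p q * (-1) ^ k) (prd (n + k - i) v (prd (m + i) u w))))
      = (\<Sum>i\<le>m. smul (of_nat (m choose i)) (prd (m + n - i) (prd (k + i) u v) w))"
    unfolding half_commutator_def
    by (intro jacobi_sum_from_commutator[where B = "\<lambda>n m. prd n v (prd m u w)"]) blast
qed

theorem lemma6p1:
  fixes smul :: "complex \<Rightarrow> 'a::ab_group_add \<Rightarrow> 'a"
    and G :: "bool \<Rightarrow> 'a set" and D :: "'a \<Rightarrow> 'a" and prd :: "nat \<Rightarrow> 'a \<Rightarrow> 'a \<Rightarrow> 'a"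
  assumes "vla_j_ss smul G D prd"
  shows "half_jacobi smul G prd \<longleftrightarrow> half_commutator smul G prd"
proof -
  have "vector_space smul"
    using assms unfolding vla_j_ss_def by blast
  then show ?thesis
    using half_commutator_if_half_jacobi half_jacobi_if_half_commutator by blast
qed

end
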